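(* Every finite semigroup divides $FT_2$, i.e. is a homomorphic image of a subsemigroup of $FT_2$.
   Context: Let $X$ be a set with two elements and $1\notin X$. Elements of height $\ge 2$ are triples $h=(h^l,h^c,h^r)$; $\Gamma_0(X)=\{1\}$, $\Gamma_1(X)=X$, each $x\in X$ identified with $(1,x,1)$; for $j\ge 2$, $\Gamma_j(X)$ is the set of triples $h\in\Gamma_{j-1}(X)\times\Gamma_{j-2}(X)\times\Gamma_{j-1}(X)$ with $h^l\neq h^r$ and $h^c\in\{(h^l)^l,(h^l)^r\}\cap\{(h^r)^l,(h^r)^r\}$; $\Gamma(X)=\bigcup_{j\ge0}\Gamma_j(X)$. Let $\rho$ be the smallest congruence on $\Gamma(X)^+$ containing $(1h,h),(h1,h),(hh,h)$ for $h\in\Gamma(X)$ and $(h^ch^lh,h)$, $(hh^rh^c,h)$, $(h^rh^chh^ch^l,h^rh^ch^l)$ for $h\in\Gamma_j(X)$, $j\ge2$. $FT_2=(\Gamma(X)^+/\rho)\setminus\{[1]\}$. *)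

theory Defs
  imports "HOL-Algebra.Group"
begin

text \<open>Elements of Gamma(X) for X a two-element set (represented by bool), with 1 not in X.
  A generator x is identified with the triple (1,x,1).\<close>
datatype gt = One | Gen bool | Node gt gt gt

fun lft :: "gt \<Rightarrow> gt" where
  "lft (Node l c r) = l" | "lft (Gen x) = One" | "lft One = One"
fun ctr :: "gt \<Rightarrow> gt" where
  "ctr (Node l c r) = c" | "ctr (Gen x) = Gen x" | "ctr One = One"
fun rgt :: "gt \<Rightarrow> gt" where
  "rgt (Node l c r) = r" | "rgt (Gen x) = One" | "rgt One = One"

inductive Gam :: "nat \<Rightarrow> gt \<Rightarrow> bool" where
  Gam0: "Gam 0 One"
| Gam1: "Gam 1 (Gen x)"
| GamS: "\<lbrakk> Gam (Suc j) l; Gam j c; Gam (Suc j) r; l \<noteq> r;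
           c \<in> {lft l, rgt l} \<inter> {lft r, rgt r} \<rbrakk> \<Longrightarrow> Gam (Suc (Suc j)) (Node l c r)"

definition Gamma :: "gt set" where
  "Gamma = {h. \<exists>j. Gam j h}"

definition Gplus :: "gt list set" where
  "Gplus = {w. w \<noteq> [] \<and> set w \<subseteq> Gamma}"

inductive rho :: "gt list \<Rightarrow> gt list \<Rightarrow> bool" where
  gen_1l: "h \<in> Gamma \<Longrightarrow> rho [One, h] [h]"
| gen_1r: "h \<in> Gamma \<Longrightarrow> rho [h, One] [h]"
| gen_idem: "h \<in> Gamma \<Longrightarrow> rho [h, h] [h]"
| gen_cl: "Gam j h \<Longrightarrow> j \<ge> 2 \<Longrightarrow> rho [ctr h, lft h, h] [h]"
| gen_rc: "Gam j h \<Longrightarrow> j \<ge> 2 \<Longrightarrow> rho [h, rgt h, ctr h] [h]"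
| gen_long: "Gam j h \<Longrightarrow> j \<ge> 2 \<Longrightarrow>
     rho [rgt h, ctr h, h, ctr h, lft h] [rgt h, ctr h, lft h]"
| refl: "w \<in> Gplus \<Longrightarrow> rho w w"
| sym: "rho u v \<Longrightarrow> rho v u"
| trans: "rho u v \<Longrightarrow> rho v w \<Longrightarrow> rho u w"
| cong_l: "rho u v \<Longrightarrow> w \<in> Gplus \<Longrightarrow> rho (w @ u) (w @ v)"
| cong_r: "rho u v \<Longrightarrow> w \<in> Gplus \<Longrightarrow> rho (u @ w) (v @ w)"

definition rhoR :: "(gt list \<times> gt list) set" where
  "rhoR = {(u, v). rho u v}"

text \<open>FT_2 = (Gamma(X)^+ / rho) minus the class of the word 1, with multiplication of classes
  induced by concatenation. The unit field of the record is irrelevant.\<close>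
definition FT2 :: "gt list set monoid" where
  "FT2 = \<lparr> carrier = (Gplus // rhoR) - {rhoR `` {[One]}},
          mult = (\<lambda>A B. \<Union>{rhoR `` {a @ b} | a b. a \<in> A \<and> b \<in> B}),
          one = {} \<rparr>"

definition is_semigroup :: "('a, 'b) monoid_scheme \<Rightarrow> bool" where
  "is_semigroup S \<longleftrightarrow>
     (\<forall>x\<in>carrier S. \<forall>y\<in>carrier S. x \<otimes>\<^bsub>S\<^esub> y \<in> carrier S) \<and>
     (\<forall>x\<in>carrier S. \<forall>y\<in>carrier S. \<forall>z\<in>carrier S.
        (x \<otimes>\<^bsub>S\<^esub> y) \<otimes>\<^bsub>S\<^esub> z = x \<otimes>\<^bsub>S\<^esub> (y \<otimes>\<^bsub>S\<^esub> z))"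

definition divides_sg :: "('a, 'c) monoid_scheme \<Rightarrow> ('b, 'd) monoid_scheme \<Rightarrow> bool" where
  "divides_sg S T \<longleftrightarrow>
     (\<exists>U f. U \<subseteq> carrier T \<and> (\<forall>a\<in>U. \<forall>b\<in>U. a \<otimes>\<^bsub>T\<^esub> b \<in> U) \<and>
            f ` U = carrier S \<and>
            (\<forall>a\<in>U. \<forall>b\<in>U. f (a \<otimes>\<^bsub>T\<^esub> b) = f a \<otimes>\<^bsub>S\<^esub> f b))"

end

theory Submission
  imports Defs "HOL-Library.Countable_Set"
begin

(*
  FT2 acts on any set as soon as the two generators act by idempotent maps and every
  h = (l, c, r) of height at least 2 acts by Q o g o R, where Q = c o l, R = r o c and g is a
  weak inverse of R o Q (R Q g R Q = R Q and g R Q g = g).  Induction on the height shows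
  that the defining relations of rho hold in every such action.  On a stack of bits with a
  mark, and for suitable weak inverses, the word (a,1,b)(b,1,a) pushes a 0 and the element
  ((b,1,a),a,(a,1,b)) replaces the top bit by a 1, so suitable words push the unary codes
  0^i 1.  Their classes therefore generate a free subsemigroup of countable rank in FT2, and
  every countable, in particular every finite, semigroup is a quotient of a subsemigroup of it.
*)

fun sg_prod :: "('a, 'b) monoid_scheme \<Rightarrow> 'a list \<Rightarrow> 'a" where
  "sg_prod S [] = undefined"
| "sg_prod S [x] = x"
| "sg_prod S (x # y # ys) = x \<otimes>\<^bsub>S\<^esub> sg_prod S (y # ys)"

lemma sg_prod_closed:
  "is_semigroup S \<Longrightarrow> xs \<noteq> [] \<Longrightarrow> set xs \<subseteq> carrier S \<Longrightarrow> sg_prod S xs \<in> carrier S"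
  by (induction S xs rule: sg_prod.induct) (auto simp: is_semigroup_def)

lemma sg_prod_append:
  assumes "is_semigroup S" "set xs \<subseteq> carrier S" "set ys \<subseteq> carrier S" "xs \<noteq> []" "ys \<noteq> []"
  shows "sg_prod S (xs @ ys) = sg_prod S xs \<otimes>\<^bsub>S\<^esub> sg_prod S ys"
  using assms
proof (induction S xs rule: sg_prod.induct)
  case (2 S x)
  then show ?case by (cases ys) auto
next
  case (3 S x y zs)
  then have "x \<in> carrier S" "sg_prod S (y # zs) \<in> carrier S" "sg_prod S ys \<in> carrier S"
    using sg_prod_closed[of S "y # zs"] sg_prod_closed[of S ys] by auto
  with 3 show ?case by (simp add: is_semigroup_def)
qed simp

lemma divides_sg_if_free_subsemigroup:
  fixes e :: "nat list \<Rightarrow> 'c"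
  assumes S: "is_semigroup S" "countable (carrier S)"
    and e_carrier: "\<And>is. is \<noteq> [] \<Longrightarrow> e is \<in> carrier T"
    and e_mult: "\<And>is js. is \<noteq> [] \<Longrightarrow> js \<noteq> [] \<Longrightarrow> e (is @ js) = e is \<otimes>\<^bsub>T\<^esub> e js"
    and e_inj: "inj_on e {is. is \<noteq> []}"
  shows "divides_sg S T"
proof (cases "carrier S = {}")
  case True
  then show ?thesis
    unfolding divides_sg_def by (intro exI[of _ "{}"]) auto
next
  case False
  define W where "W = {is :: nat list. is \<noteq> []}"
  define s where "s = from_nat_into (carrier S)"
  define f where "f a = sg_prod S (map s (inv_into W e a))" for a
  have s: "range s = carrier S"
    using False S(2) by (simp add: s_def)
  have f_e: "f (e is) = sg_prod S (map s is)" if "is \<in> W" for "is"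
    using e_inj that by (simp add: f_def W_def)
  have prod_closed: "sg_prod S (map s is) \<in> carrier S" if "is \<in> W" for "is"
    using that s S(1) by (auto simp: W_def intro!: sg_prod_closed rangeI)
  show ?thesis
    unfolding divides_sg_def
  proof (intro exI[of _ "e ` W"] exI[of _ f] conjI ballI)
    show "e ` W \<subseteq> carrier T"
      using e_carrier by (auto simp: W_def)
  next
    fix a b assume "a \<in> e ` W" "b \<in> e ` W"
    then obtain "is" js where "is \<in> W" "js \<in> W" "a = e is" "b = e js"
      by auto
    then have "a \<otimes>\<^bsub>T\<^esub> b = e (is @ js)" "is @ js \<in> W"
      using e_mult by (simp_all add: W_def)
    then show "a \<otimes>\<^bsub>T\<^esub> b \<in> e ` W"
      by blast
  next
    show "f ` e ` W = carrier S"
    proof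
      show "f ` e ` W \<subseteq> carrier S"
        using f_e prod_closed by auto
      show "carrier S \<subseteq> f ` e ` W"
      proof
        fix x assume "x \<in> carrier S"
        then obtain i where "x = s i"
          using s by auto
        then have "x = f (e [i])"
          using f_e by (simp add: W_def)
        then show "x \<in> f ` e ` W"
          by (simp add: W_def)
      qed
    qed
  next
    fix a b assume "a \<in> e ` W" "b \<in> e ` W"
    then obtain "is" js where ij: "is \<in> W" "js \<in> W" "a = e is" "b = e js"
      by auto
    then have "f (a \<otimes>\<^bsub>T\<^esub> b) = sg_prod S (map s is @ map s js)"
      using e_mult[of "is" js] f_e[of "is @ js"] by (simp add: W_def)
    also have "\<dots> = f a \<otimes>\<^bsub>S\<^esub> f b"
      using ij s S(1) f_e by (subst sg_prod_append) (auto simp: W_def)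
    finally show "f (a \<otimes>\<^bsub>T\<^esub> b) = f a \<otimes>\<^bsub>S\<^esub> f b" .
  qed
qed

lemma Gamma_children: "Gam j h \<Longrightarrow> 2 \<le> j \<Longrightarrow> {lft h, ctr h, rgt h} \<subseteq> Gamma"
  by (cases rule: Gam.cases) (auto simp: Gamma_def)

lemma rho_Gplus: "rho u v \<Longrightarrow> u \<in> Gplus \<and> v \<in> Gplus"
  by (induction rule: rho.induct) (auto simp: Gplus_def Gamma_def intro: Gam0 dest: Gamma_children)

lemma equiv_rhoR: "equiv Gplus rhoR"
proof (rule equivI)
  show "rhoR \<subseteq> Gplus \<times> Gplus"
    using rho_Gplus by (auto simp: rhoR_def)
  show "refl_on Gplus rhoR"
    by (auto simp: rhoR_def intro!: refl_onI rho.refl)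
  show "sym rhoR"
    by (auto simp: rhoR_def intro!: symI rho.sym)
  show "trans rhoR"
    by (auto simp: rhoR_def intro!: transI elim: rho.trans)
qed

lemma FT2_mult_class:
  assumes "u \<in> Gplus" "v \<in> Gplus"
  shows "rhoR `` {u} \<otimes>\<^bsub>FT2\<^esub> rhoR `` {v} = rhoR `` {u @ v}"
proof -
  have "rhoR `` {a @ b} = rhoR `` {u @ v}" if "(u, a) \<in> rhoR" "(v, b) \<in> rhoR" for a b
  proof -
    have "a \<in> Gplus"
      using that rho_Gplus by (auto simp: rhoR_def)
    then have "(u @ v, a @ b) \<in> rhoR"
      using that assms by (auto simp: rhoR_def intro: rho.trans rho.cong_l rho.cong_r)
    then show ?thesis
      using equiv_class_eq[OF equiv_rhoR] by simp
  qed
  moreover have "(u, u) \<in> rhoR" "(v, v) \<in> rhoR"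
    using assms by (simp_all add: rhoR_def rho.refl)
  ultimately have "{rhoR `` {a @ b} | a b. a \<in> rhoR `` {u} \<and> b \<in> rhoR `` {v}} = {rhoR `` {u @ v}}"
    by blast
  then show ?thesis
    by (simp add: FT2_def)
qed

definition idempotent_map :: "('a \<Rightarrow> 'a) \<Rightarrow> bool" where
  "idempotent_map f \<longleftrightarrow> (\<forall>x. f (f x) = f x)"

definition weak_inverse :: "('a \<Rightarrow> 'a) \<Rightarrow> ('a \<Rightarrow> 'a) \<Rightarrow> bool" where
  "weak_inverse g f \<longleftrightarrow> (\<forall>x. f (g (f x)) = f x) \<and> (\<forall>x. g (f (g x)) = g x)"

lemma weak_inverse_inv_into: "weak_inverse (inv_into UNIV f \<circ> f \<circ> inv_into UNIV f) f"
proof -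
  have "f (inv_into UNIV f (f x)) = f x" for x
    by (simp add: f_inv_into_f)
  then show ?thesis
    by (simp add: weak_inverse_def)
qed

definition winv_choice :: "(('a \<Rightarrow> 'a) \<times> ('a \<Rightarrow> 'a)) list \<Rightarrow> ('a \<Rightarrow> 'a) \<Rightarrow> 'a \<Rightarrow> 'a" where
  "winv_choice ps f =
     (case map_of ps f of Some g \<Rightarrow> g | None \<Rightarrow> inv_into UNIV f \<circ> f \<circ> inv_into UNIV f)"

lemma weak_inverse_winv_choice:
  assumes "\<forall>(f, g) \<in> set ps. weak_inverse g f"
  shows "weak_inverse (winv_choice ps f) f"
  using assms weak_inverse_inv_into
  by (auto simp: winv_choice_def split: option.split dest: map_of_SomeD)

lemma weak_inverse_sandwich:
  fixes Q R g :: "'a \<Rightarrow> 'a"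
  assumes g: "weak_inverse g (R \<circ> Q)" and Q: "idempotent_map Q" and R: "idempotent_map R"
  defines "n \<equiv> Q \<circ> g \<circ> R"
  shows "idempotent_map n" and "Q \<circ> n = n" and "n \<circ> R = n" and "R \<circ> n \<circ> Q = R \<circ> Q"
    and "R \<circ> a \<circ> Q = R \<circ> Q \<Longrightarrow> idempotent_map (a \<circ> n) \<and> idempotent_map (n \<circ> a)"
proof -
  have gRQ: "R (Q (g (R (Q x)))) = R (Q x)" "g (R (Q (g x))) = g x" for x
    using g by (simp_all add: weak_inverse_def)
  show "idempotent_map n" "Q \<circ> n = n" "n \<circ> R = n" "R \<circ> n \<circ> Q = R \<circ> Q"
    using Q R by (simp_all add: n_def idempotent_map_def fun_eq_iff gRQ)
  assume "R \<circ> a \<circ> Q = R \<circ> Q"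
  then have "R (a (Q x)) = R (Q x)" for x
    by (metis comp_apply)
  then show "idempotent_map (a \<circ> n) \<and> idempotent_map (n \<circ> a)"
    by (simp add: n_def idempotent_map_def gRQ)
qed

locale gamma_action =
  fixes gen :: "bool \<Rightarrow> 'a \<Rightarrow> 'a" and winv :: "('a \<Rightarrow> 'a) \<Rightarrow> 'a \<Rightarrow> 'a"
  assumes idempotent_gen: "idempotent_map (gen x)"
    and weak_inverse_winv: "weak_inverse (winv f) f"
begin

fun act :: "gt \<Rightarrow> 'a \<Rightarrow> 'a" where
  "act One = id"
| "act (Gen x) = gen x"
| "act (Node l c r) =
     (act c \<circ> act l) \<circ> winv ((act r \<circ> act c) \<circ> (act c \<circ> act l)) \<circ> (act r \<circ> act c)"

fun act_word :: "gt list \<Rightarrow> 'a \<Rightarrow> 'a" where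
  "act_word [] = id"
| "act_word (h # w) = act h \<circ> act_word w"

lemma act_word_append [simp]: "act_word (u @ v) = act_word u \<circ> act_word v"
  by (induction u) (simp_all add: o_assoc)

definition act_idempotents :: "gt \<Rightarrow> bool" where
  "act_idempotents h \<longleftrightarrow> idempotent_map (act h) \<and>
     (\<forall>d \<in> {lft h, rgt h}. idempotent_map (act d \<circ> act h) \<and> idempotent_map (act h \<circ> act d))"

lemma act_Node:
  assumes "act_idempotents l" "act_idempotents c" "act_idempotents r"
    and "c \<in> {lft l, rgt l}" "c \<in> {lft r, rgt r}"
  shows "act_idempotents (Node l c r)"
    and "act_word [c, l, Node l c r] = act_word [Node l c r]"
    and "act_word [Node l c r, r, c] = act_word [Node l c r]"
    and "act_word [r, c, Node l c r, c, l] = act_word [r, c, l]"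
proof -
  define Q where "Q = act c \<circ> act l"
  define R where "R = act r \<circ> act c"
  have c: "idempotent_map (act c)" and Q: "idempotent_map Q" and R: "idempotent_map R"
    using assms unfolding act_idempotents_def Q_def R_def by auto
  have n: "act (Node l c r) = Q \<circ> winv (R \<circ> Q) \<circ> R"
    by (simp add: Q_def R_def)
  note sandwich = weak_inverse_sandwich[OF weak_inverse_winv Q R, folded n]
  have RQ: "R \<circ> Q = act r \<circ> act c \<circ> act l"
    using c by (simp add: Q_def R_def idempotent_map_def fun_eq_iff)
  have "R \<circ> act l \<circ> Q = R \<circ> Q" "R \<circ> act r \<circ> Q = R \<circ> Q"
    using Q R c by (simp_all add: Q_def R_def idempotent_map_def fun_eq_iff)
  then show "act_idempotents (Node l c r)"
    using sandwich(1,5) by (simp add: act_idempotents_def)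
  show "act_word [c, l, Node l c r] = act_word [Node l c r]"
    using sandwich(2) by (simp add: Q_def o_assoc)
  show "act_word [Node l c r, r, c] = act_word [Node l c r]"
    using sandwich(3) by (simp add: R_def o_assoc)
  show "act_word [r, c, Node l c r, c, l] = act_word [r, c, l]"
    using sandwich(4) RQ by (simp add: Q_def R_def o_assoc)
qed

lemma act_idempotents_Gam: "Gam j h \<Longrightarrow> act_idempotents h"
proof (induction rule: Gam.induct)
  case Gam0
  then show ?case by (simp add: act_idempotents_def idempotent_map_def)
next
  case (Gam1 x)
  then show ?case using idempotent_gen by (simp add: act_idempotents_def)
next
  case (GamS j l c r)
  then show ?case using act_Node(1) by blast
qed

lemma act_Gam_relations:
  assumes "Gam j h" "2 \<le> j"
  shows "act_word [ctr h, lft h, h] = act_word [h]"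
    and "act_word [h, rgt h, ctr h] = act_word [h]"
    and "act_word [rgt h, ctr h, h, ctr h, lft h] = act_word [rgt h, ctr h, lft h]"
proof -
  obtain l c r j' where h: "h = Node l c r"
    and Gams: "Gam (Suc j') l" "Gam j' c" "Gam (Suc j') r"
    and c: "c \<in> {lft l, rgt l}" "c \<in> {lft r, rgt r}"
    using assms by (cases rule: Gam.cases) auto
  note act_Node = act_Node[OF Gams[THEN act_idempotents_Gam] c]
  show "act_word [ctr h, lft h, h] = act_word [h]"
    and "act_word [h, rgt h, ctr h] = act_word [h]"
    and "act_word [rgt h, ctr h, h, ctr h, lft h] = act_word [rgt h, ctr h, lft h]"
    using act_Node(2-4) by (simp_all add: h)
qed

lemma act_word_rho: "rho u v \<Longrightarrow> act_word u = act_word v"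
proof (induction rule: rho.induct)
  case (gen_idem h)
  then obtain j where "Gam j h" by (auto simp: Gamma_def)
  then show ?case
    using act_idempotents_Gam by (simp add: act_idempotents_def idempotent_map_def fun_eq_iff)
qed (use act_Gam_relations in auto)

lemma act_word_eq_if_rhoR_class_eq:
  "rhoR `` {u} = rhoR `` {v} \<Longrightarrow> v \<in> Gplus \<Longrightarrow> act_word u = act_word v"
  using eq_equiv_class[OF _ equiv_rhoR, of u v] act_word_rho by (simp add: rhoR_def)

end

type_synonym stack = "bool list \<times> bool"

fun mark :: "stack \<Rightarrow> stack" where
  "mark (w, _) = (w, True)"

fun unmark :: "stack \<Rightarrow> stack" where
  "unmark (w, _) = (w, False)"

fun pop_marked :: "stack \<Rightarrow> stack" where
  "pop_marked (w, t) = (if t then tl w else w, False)"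

fun push :: "bool \<Rightarrow> stack \<Rightarrow> stack" where
  "push b (w, _) = (b # w, True)"

fun pop :: "stack \<Rightarrow> stack" where
  "pop (w, t) = (tl w, t)"

(* Any weak inverses would satisfy the relations of rho; these ones make h_ab, h_ba and
   h_ba_a_ab below act as simple stack operations. *)
definition stack_weak_inverses :: "((stack \<Rightarrow> stack) \<times> (stack \<Rightarrow> stack)) list" where
  "stack_weak_inverses =
     [(pop_marked \<circ> mark, push False),
      (mark \<circ> pop_marked, unmark),
      (push False \<circ> pop_marked \<circ> mark, push True \<circ> pop)]"

interpretation stack:
  gamma_action "\<lambda>x. if x then mark else pop_marked" "winv_choice stack_weak_inverses"
proof
  show "idempotent_map (if x then mark else pop_marked)" for x
    by (simp add: idempotent_map_def split_paired_all)
  show "weak_inverse (winv_choice stack_weak_inverses f) f" for f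
    by (rule weak_inverse_winv_choice)
      (simp add: stack_weak_inverses_def weak_inverse_def split_paired_All)
qed

lemma stack_maps_distinct:
  "mark \<circ> pop_marked \<noteq> pop_marked \<circ> mark"
  "push False \<circ> pop_marked \<circ> mark \<noteq> pop_marked \<circ> mark"
  "push False \<circ> pop_marked \<circ> mark \<noteq> mark \<circ> pop_marked"
  by (auto simp: fun_eq_iff dest: spec[of _ "([], True)"])

definition h_ab :: gt where "h_ab = Node (Gen True) One (Gen False)"
definition h_ba :: gt where "h_ba = Node (Gen False) One (Gen True)"
definition h_ba_a_ab :: gt where "h_ba_a_ab = Node h_ba (Gen True) h_ab"

lemma Gam_h_ab: "Gam 2 h_ab" and Gam_h_ba: "Gam 2 h_ba"
  unfolding h_ab_def h_ba_def numeral_2_eq_2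
  by (auto intro!: Gam.intros Gam1[simplified])

lemma Gam_h_ba_a_ab: "Gam 3 h_ba_a_ab"
  unfolding h_ba_a_ab_def numeral_3_eq_3
  using Gam_h_ab Gam_h_ba
  by (auto intro!: Gam.intros Gam1[simplified] simp: numeral_2_eq_2 h_ab_def h_ba_def)

lemma stack_winv:
  "winv_choice stack_weak_inverses (pop_marked \<circ> mark) = push False"
  "winv_choice stack_weak_inverses (mark \<circ> pop_marked) = unmark"
  "winv_choice stack_weak_inverses (push False \<circ> pop_marked \<circ> mark) = push True \<circ> pop"
  using stack_maps_distinct by (simp_all add: winv_choice_def stack_weak_inverses_def)

lemma act_h_ab: "stack.act h_ab = push False \<circ> pop_marked"
  by (simp add: h_ab_def stack_winv fun_eq_iff split_paired_all)

lemma act_h_ba: "stack.act h_ba = unmark"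
  by (simp add: h_ba_def stack_winv fun_eq_iff split_paired_all)

lemma act_h_ba_a_ab: "stack.act h_ba_a_ab = push True \<circ> pop"
proof -
  have unmark_absorbed:
    "push False \<circ> pop_marked \<circ> mark \<circ> (mark \<circ> unmark) = push False \<circ> pop_marked \<circ> mark"
    by (simp add: fun_eq_iff split_paired_all)
  show ?thesis
    by (simp add: h_ba_a_ab_def act_h_ab act_h_ba unmark_absorbed stack_winv fun_eq_iff
        split_paired_all)
qed

definition unary :: "nat \<Rightarrow> bool list" where
  "unary i = replicate i False @ [True]"

lemma unary_ne_Nil [simp]: "unary i \<noteq> []"
  by (simp add: unary_def)

lemma unary_append_eq_iff: "unary i @ xs = unary j @ ys \<longleftrightarrow> i = j \<and> xs = ys"
proof (induction i arbitrary: j)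
  case 0
  then show ?case by (cases j) (auto simp: unary_def)
next
  case (Suc i)
  then show ?case by (cases j) (auto simp: unary_def)
qed

lemma inj_concat_map_unary: "concat (map unary is) = concat (map unary js) \<Longrightarrow> is = js"
proof (induction "is" arbitrary: js)
  case Nil
  then show ?case by (cases js) auto
next
  case (Cons i "is")
  then show ?case by (cases js) (auto simp: unary_append_eq_iff)
qed

definition codeword :: "nat \<Rightarrow> gt list" where
  "codeword i = concat (replicate i [h_ab, h_ba]) @ [h_ba_a_ab, h_ab, h_ba]"

lemma act_word_codeword: "stack.act_word (codeword i) (w, t) = (unary i @ w, True)"
proof -
  have "stack.act_word (concat (replicate i [h_ab, h_ba])) (v, True) = (replicate i False @ v, True)"
    for v
    by (induction i) (simp_all add: act_h_ab act_h_ba)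
  then show ?thesis
    by (simp add: codeword_def unary_def act_h_ab act_h_ba act_h_ba_a_ab)
qed

lemma act_word_codewords:
  "stack.act_word (concat (map codeword is)) (w, True) = (concat (map unary is) @ w, True)"
  by (induction "is" arbitrary: w) (simp_all add: act_word_codeword)

lemma codewords_Gplus: "is \<noteq> [] \<Longrightarrow> concat (map codeword is) \<in> Gplus"
  using Gam_h_ab Gam_h_ba Gam_h_ba_a_ab
  by (cases "is") (auto simp: Gplus_def Gamma_def codeword_def)

definition code_class :: "nat list \<Rightarrow> gt list set" where
  "code_class is = rhoR `` {concat (map codeword is)}"

lemma code_class_in_FT2:
  assumes "is \<noteq> []"
  shows "code_class is \<in> carrier FT2"
proof -
  have "code_class is \<noteq> rhoR `` {[One]}"
  proof
    assume "code_class is = rhoR `` {[One]}"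
    moreover have "[One] \<in> Gplus"
      using Gam0 by (auto simp: Gplus_def Gamma_def)
    ultimately have "stack.act_word (concat (map codeword is)) = stack.act_word [One]"
      unfolding code_class_def by (rule stack.act_word_eq_if_rhoR_class_eq)
    then have "concat (map unary is) = []"
      using act_word_codewords[of "is" "[]"] by simp
    with \<open>is \<noteq> []\<close> show False
      by (cases "is") simp_all
  qed
  then show ?thesis
    using codewords_Gplus[OF \<open>is \<noteq> []\<close>] by (simp add: FT2_def code_class_def quotientI)
qed

lemma code_class_append:
  "is \<noteq> [] \<Longrightarrow> js \<noteq> [] \<Longrightarrow> code_class (is @ js) = code_class is \<otimes>\<^bsub>FT2\<^esub> code_class js"
  by (simp add: code_class_def FT2_mult_class codewords_Gplus)

lemma inj_on_code_class: "inj_on code_class {is. is \<noteq> []}"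
proof (rule inj_onI)
  fix "is" js assume "is \<in> {is. is \<noteq> []}" "js \<in> {is. is \<noteq> []}" "code_class is = code_class js"
  then have "stack.act_word (concat (map codeword is)) = stack.act_word (concat (map codeword js))"
    unfolding code_class_def by (auto intro: stack.act_word_eq_if_rhoR_class_eq codewords_Gplus)
  then have "concat (map unary is) = concat (map unary js)"
    using act_word_codewords[of _ "[]"] by (metis append_Nil2 prod.inject)
  then show "is = js"
    by (rule inj_concat_map_unary)
qed

theorem corollary6p11:
  fixes S :: "('a, 'b) monoid_scheme"
  assumes "is_semigroup S" and "finite (carrier S)"
  shows "divides_sg S FT2"
proof (rule divides_sg_if_free_subsemigroup[where e = code_class])
  show "is_semigroup S"
    by (fact assms(1))
  show "countable (carrier S)"
    using assms(2) by (rule countable_finite)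
qed (simp_all add: code_class_in_FT2 code_class_append inj_on_code_class)

end
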